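(* Let $p \ge 1$, $1 \le n \le p$, let $\mathcal{F} \in \mathbb{C}^{p\times p}$ be the unitary discrete Fourier transform matrix, and for $\Omega \subset \{1,\dots,p\}$ let $P_\Omega$ be the operator keeping the entries indexed by $\Omega$. For $x \in \mathbb{C}^p\setminus\{0\}$ set $f_\Omega(x) := \|P_\Omega \mathcal{F} x\|_2^2/\|x\|_2^2$, and for a measurement pattern $\Omega$ and signal $x^\natural$ let $\hat{x}_\Omega := \mathcal{F}^H P_\Omega^T P_\Omega \mathcal{F} x^\natural$. Let $\mathbb{P}$ be a probability distribution on $\mathbb{C}^p$ with $\mathbb{P}(\{0\})=0$, let $x_1,\dots,x_m$ be i.i.d. with law $\mathbb{P}$ (training signals), and let $x^\natural \sim \mathbb{P}$ be independent of $x_1,\dots,x_m$. Let $\mathcal{A} := \{\Omega \subset \{1,\dots,p\} : |\Omega| = n\}$, let $$\varepsilon_{\mathbb{P}} := \max_{\Omega \in \mathcal{A}} \mathbb{E}_{x\sim\mathbb{P}} f_\Omega(x),$$ and let $\Omega_m$ be any maximizer over $\Omega \in \mathcal{A}$ of $\frac{1}{m}\sum_{i=1}^m f_\Omega(x_i)$. Then for every $\beta \in (0,1)$, with probability at least $1-\beta$ over $x_1,\dots,x_m$, $$\mathbb{E}_{x^\natural}\!\left[\frac{\|\hat{x}_{\Omega_m} - x^\natural\|_2^2}{\|x^\natural\|_2^2}\,\middle|\, x_1,\dots,x_m\right] \le 1 - \varepsilon_{\mathbb{P}} + \varepsilon_m, \quad\text{where } \varepsilon_m = \sqrt{\frac{2}{m}\left[\log\binom{p}{n}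 + \log\frac{2}{\beta}\right]}.$$
   Context: $\mathcal{F}^H$ is the conjugate transpose of $\mathcal{F}$ and $P_\Omega^T$ the zero-filling adjoint of $P_\Omega$; $\hat{x}_\Omega$ is the least-squares reconstruction from the sub-sampled Fourier measurements $y = P_\Omega\mathcal{F}x^\natural$. The quantity $1-\varepsilon_{\mathbb{P}}$ is the expected normalized reconstruction error attained by the optimal pattern for the (unknown) distribution $\mathbb{P}$; $\Omega_m$ is the pattern obtained by empirical maximization over the training signals. The expectation in the conclusion is over $x^\natural \sim \mathbb{P}$ with the training signals (hence $\Omega_m$) held fixed. *)

theory Defs
  imports "HOL-Probability.Probability"
begin

text \<open>Signals in C^p are represented as functions nat => complex whose relevant
  coordinates are 0,...,p-1 (0-based indexing of {1,...,p}).\<close>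

definition dft :: "nat \<Rightarrow> nat \<Rightarrow> nat \<Rightarrow> complex" where
  "dft p j k = cis (- 2 * pi * real j * real k / real p) / complex_of_real (sqrt (real p))"

definition dft_apply :: "nat \<Rightarrow> (nat \<Rightarrow> complex) \<Rightarrow> nat \<Rightarrow> complex" where
  "dft_apply p x j = (\<Sum>k<p. dft p j k * x k)"

definition dft_adj :: "nat \<Rightarrow> (nat \<Rightarrow> complex) \<Rightarrow> nat \<Rightarrow> complex" where
  "dft_adj p y k = (\<Sum>j<p. cnj (dft p j k) * y j)"

text \<open>P_Omega^T P_Omega : keep entries indexed by Omega, zero-fill the rest.\<close>
definition zero_fill :: "nat set \<Rightarrow> (nat \<Rightarrow> complex) \<Rightarrow> nat \<Rightarrow> complex" where
  "zero_fill \<Omega> y j = (if j \<in> \<Omega> then y j else 0)"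

definition sqnorm :: "nat \<Rightarrow> (nat \<Rightarrow> complex) \<Rightarrow> real" where
  "sqnorm p x = (\<Sum>j<p. (cmod (x j))\<^sup>2)"

text \<open>f_Omega(x) = ||P_Omega F x||^2 / ||x||^2 (||P_Omega y||^2 = sum over Omega of |y_j|^2).\<close>
definition f_pat :: "nat \<Rightarrow> nat set \<Rightarrow> (nat \<Rightarrow> complex) \<Rightarrow> real" where
  "f_pat p \<Omega> x = (\<Sum>j\<in>\<Omega>. (cmod (dft_apply p x j))\<^sup>2) / sqnorm p x"

definition recon :: "nat \<Rightarrow> nat set \<Rightarrow> (nat \<Rightarrow> complex) \<Rightarrow> nat \<Rightarrow> complex" where
  "recon p \<Omega> x = dft_adj p (zero_fill \<Omega> (dft_apply p x))"

definition rel_err :: "nat \<Rightarrow> nat set \<Rightarrow> (nat \<Rightarrow> complex) \<Rightarrow> real" where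
  "rel_err p \<Omega> x = sqnorm p (\<lambda>j. recon p \<Omega> x j - x j) / sqnorm p x"

definition patterns :: "nat \<Rightarrow> nat \<Rightarrow> nat set set" where
  "patterns p n = {\<Omega>. \<Omega> \<subseteq> {..<p} \<and> card \<Omega> = n}"

definition eps_P :: "nat \<Rightarrow> nat \<Rightarrow> (nat \<Rightarrow> complex) measure \<Rightarrow> real" where
  "eps_P p n P = Max ((\<lambda>\<Omega>. \<integral>x. f_pat p \<Omega> x \<partial>P) ` patterns p n)"

definition emp_avg :: "nat \<Rightarrow> nat \<Rightarrow> nat set \<Rightarrow> (nat \<Rightarrow> nat \<Rightarrow> complex) \<Rightarrow> real" where
  "emp_avg p m \<Omega> xs = (1 / real m) * (\<Sum>i<m. f_pat p \<Omega> (xs i))"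

end

theory Submission
  imports Defs "HOL-Library.Real_Mod"
begin

text \<open>
  The unitary DFT preserves norms (Parseval), so zero-filled reconstruction from the
  frequencies in \<open>\<Omega>\<close> loses exactly the energy outside \<open>\<Omega>\<close>: the relative error equals
  \<open>1 - f\<^sub>\<Omega>(x)\<close> for \<open>x \<noteq> 0\<close>, and the expected error is \<open>1 - \<bbbE> f\<^sub>\<Omega>\<close>. Each \<open>f\<^sub>\<Omega>\<close> takes
  values in \<open>[0,1]\<close>, so Hoeffding's inequality and a union bound over the \<open>p choose n\<close>
  patterns show that, with probability at least \<open>1 - \<beta>\<close>, no empirical mean exceeds its
  expectation by \<open>\<epsilon>\<^sub>m/2\<close> and the empirical mean of an optimal pattern does not fall
  \<open>\<epsilon>\<^sub>m/2\<close> below its expectation. On that event the empirical maximiser is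
  \<open>\<epsilon>\<^sub>m\<close>-optimal for \<open>\<bbbE> f\<^sub>\<Omega>\<close>.
\<close>

lemma dft_commute: "dft p j k = dft p k j"
  unfolding dft_def by (simp add: mult.commute mult.left_commute)

lemma sum_powers_cis_eq_0:
  fixes d :: int
  assumes "p > 0" and "\<not> int p dvd d"
  shows "(\<Sum>l<p. cis (2 * pi * d / p) ^ l) = 0"
proof -
  define w where "w = cis (2 * pi * d / p)"
  have "w ^ p = cis (real p * (2 * pi * d / p))"
    unfolding w_def by (simp only: Complex.DeMoivre)
  also have "\<dots> = cis (2 * pi * d)"
    using assms(1) by simp
  also have "\<dots> = 1"
    by (rule cis_multiple_2pi) simp
  finally have "w ^ p = 1" .
  moreover have "w \<noteq> 1"
  proof
    assume "w = 1"
    then obtain n :: int where "2 * pi * d / p = n * (2 * pi)"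
      unfolding w_def cis_eq_1_iff by blast
    then have "real_of_int d * (2 * pi) = (of_int n * real p) * (2 * pi)"
      using assms(1) by (simp add: field_simps)
    then have "real_of_int d = of_int (n * int p)"
      by simp
    then have "d = n * int p"
      by (simp only: of_int_eq_iff)
    then show False using assms(2) by simp
  qed
  ultimately show ?thesis
    unfolding w_def[symmetric] by (simp add: sum_gp_strict)
qed

lemma cnj_dft_mult_dft:
  "cnj (dft p l j) * dft p l k = cis (2 * pi * (int j - int k) / p) ^ l / p"
proof -
  have "cnj (dft p l j) = cis (2 * pi * l * j / p) / sqrt p"
    unfolding dft_def complex_cnj_divide complex_cnj_complex_of_real cis_cnj
    by (simp only: minus_divide_left mult_minus_left minus_minus)
  then have "cnj (dft p l j) * dft p l k
      = cis (2 * pi * l * j / p) * cis (- 2 * pi * l * k / p) / (sqrt p * sqrt p)"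
    unfolding dft_def by (simp only: times_divide_times_eq of_real_mult)
  also have "complex_of_real (sqrt p * sqrt p) = p"
    by simp
  also have "cis (2 * pi * l * j / p) * cis (- 2 * pi * l * k / p)
      = cis (l * (2 * pi * (int j - int k) / p))"
    unfolding cis_mult by (rule arg_cong[where f = cis]) (simp add: algebra_simps diff_divide_distrib)
  finally show ?thesis
    by (simp only: Complex.DeMoivre)
qed

lemma dft_orthonormal:
  assumes "j < p" "k < p"
  shows "(\<Sum>l<p. cnj (dft p l j) * dft p l k) = (if j = k then 1 else 0)"
proof (cases "j = k")
  case True
  then show ?thesis using assms by (simp add: cnj_dft_mult_dft)
next
  case False
  have "\<not> int p dvd \<bar>int j - int k\<bar>"
    using assms False by (intro zdvd_not_zless) auto
  then have "(\<Sum>l<p. cis (2 * pi * (int j - int k) / p) ^ l) = 0"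
    using assms by (intro sum_powers_cis_eq_0) auto
  then show ?thesis
    using False by (simp add: cnj_dft_mult_dft flip: sum_divide_distrib)
qed

lemma sqnorm_orthonormal_columns:
  assumes "\<And>k l. k < p \<Longrightarrow> l < p \<Longrightarrow> (\<Sum>j<p. cnj (A j l) * A j k) = (if l = k then 1 else 0)"
  shows "sqnorm p (\<lambda>j. \<Sum>k<p. A j k * y k) = sqnorm p y"
proof -
  have "complex_of_real (sqnorm p (\<lambda>j. \<Sum>k<p. A j k * y k))
      = (\<Sum>j<p. (\<Sum>k<p. A j k * y k) * cnj (\<Sum>l<p. A j l * y l))"
    unfolding sqnorm_def of_real_sum complex_norm_square by simp
  also have "\<dots> = (\<Sum>j<p. \<Sum>k<p. \<Sum>l<p. y k * cnj (y l) * (cnj (A j l) * A j k))"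
    by (simp add: sum_distrib_left sum_distrib_right mult_ac, rule sum.cong[OF refl], rule sum.swap)
  also have "\<dots> = (\<Sum>k<p. \<Sum>l<p. \<Sum>j<p. y k * cnj (y l) * (cnj (A j l) * A j k))"
    by (subst sum.swap) (rule sum.cong[OF refl], rule sum.swap)
  also have "\<dots> = (\<Sum>k<p. \<Sum>l<p. y k * cnj (y l) * (\<Sum>j<p. cnj (A j l) * A j k))"
    by (simp add: sum_distrib_left)
  also have "\<dots> = (\<Sum>k<p. y k * cnj (y k))"
    by (simp add: assms if_distrib cong: if_cong)
  also have "\<dots> = complex_of_real (sqnorm p y)"
    unfolding sqnorm_def of_real_sum complex_norm_square by simp
  finally show ?thesis by (simp only: of_real_eq_iff)
qed

lemma sqnorm_dft_apply: "sqnorm p (dft_apply p x) = sqnorm p x"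
  unfolding dft_apply_def by (rule sqnorm_orthonormal_columns) (simp add: dft_orthonormal)

lemma sqnorm_dft_adj: "sqnorm p (dft_adj p y) = sqnorm p y"
proof -
  have "(\<Sum>j<p. cnj (cnj (dft p l j)) * cnj (dft p k j)) = (if l = k then 1 else 0)"
    if "k < p" "l < p" for k l
  proof -
    have "cnj (cnj (dft p l j)) * cnj (dft p k j) = cnj (cnj (dft p j l) * dft p j k)" for j
      by (simp only: complex_cnj_cnj complex_cnj_mult dft_commute[of p l j] dft_commute[of p k j])
    then have "(\<Sum>j<p. cnj (cnj (dft p l j)) * cnj (dft p k j))
        = cnj (\<Sum>j<p. cnj (dft p j l) * dft p j k)"
      by (simp only: cnj_sum)
    also have "\<dots> = (if l = k then 1 else 0)"
      by (simp only: dft_orthonormal[OF that(2,1)]) simp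
    finally show ?thesis .
  qed
  then show ?thesis
    unfolding dft_adj_def by (rule sqnorm_orthonormal_columns)
qed

lemma dft_adj_dft_apply: "k < p \<Longrightarrow> dft_adj p (dft_apply p x) k = x k"
proof -
  assume "k < p"
  have "dft_adj p (dft_apply p x) k = (\<Sum>j<p. \<Sum>l<p. cnj (dft p j k) * dft p j l * x l)"
    unfolding dft_adj_def dft_apply_def by (simp add: sum_distrib_left mult.assoc)
  also have "\<dots> = (\<Sum>l<p. (\<Sum>j<p. cnj (dft p j k) * dft p j l) * x l)"
    by (subst sum.swap) (simp add: sum_distrib_right)
  also have "\<dots> = (\<Sum>l<p. if k = l then x l else 0)"
    using \<open>k < p\<close> by (intro sum.cong) (simp_all add: dft_orthonormal)
  also have "\<dots> = x k"
    using \<open>k < p\<close> by simp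
  finally show ?thesis .
qed

lemma sqnorm_nonneg: "0 \<le> sqnorm p x"
  unfolding sqnorm_def by (intro sum_nonneg) auto

lemma sqnorm_eq_0_iff: "sqnorm p x = 0 \<longleftrightarrow> (\<forall>j<p. x j = 0)"
  unfolding sqnorm_def by (subst sum_nonneg_eq_0_iff) auto

lemma sqnorm_cong: "(\<And>j. j < p \<Longrightarrow> x j = y j) \<Longrightarrow> sqnorm p x = sqnorm p y"
  unfolding sqnorm_def by simp

lemma f_pat_bounds:
  assumes "\<Omega> \<subseteq> {..<p}"
  shows "f_pat p \<Omega> x \<in> {0..1}"
proof -
  have "(\<Sum>j\<in>\<Omega>. (cmod (dft_apply p x j))\<^sup>2) \<le> sqnorm p (dft_apply p x)"
    unfolding sqnorm_def using assms by (intro sum_mono2) auto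
  moreover have "0 \<le> (\<Sum>j\<in>\<Omega>. (cmod (dft_apply p x j))\<^sup>2)"
    by (intro sum_nonneg) simp
  ultimately show ?thesis
    unfolding f_pat_def using sqnorm_nonneg[of p x] by (auto simp: sqnorm_dft_apply divide_le_eq_1)
qed

lemma rel_err_eq:
  assumes "\<Omega> \<subseteq> {..<p}"
  shows "rel_err p \<Omega> x = (if sqnorm p x = 0 then 0 else 1 - f_pat p \<Omega> x)"
proof (cases "sqnorm p x = 0")
  case True
  then show ?thesis by (simp add: rel_err_def)
next
  case False
  define y where "y = dft_apply p x"
  define z where "z = (\<lambda>j. zero_fill \<Omega> y j - y j)"
  have "recon p \<Omega> x j - x j = dft_adj p z j" if "j < p" for j
  proof -
    have "recon p \<Omega> x j - x j = dft_adj p (zero_fill \<Omega> y) j - dft_adj p y j"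
      unfolding recon_def y_def using dft_adj_dft_apply[OF that, of x] by simp
    also have "\<dots> = dft_adj p z j"
      unfolding dft_adj_def z_def by (simp add: sum_subtractf right_diff_distrib)
    finally show ?thesis .
  qed
  then have "sqnorm p (\<lambda>j. recon p \<Omega> x j - x j) = sqnorm p (dft_adj p z)"
    by (rule sqnorm_cong)
  also have "\<dots> = sqnorm p z"
    by (rule sqnorm_dft_adj)
  also have "\<dots> = (\<Sum>j<p. if j \<in> \<Omega> then 0 else (cmod (y j))\<^sup>2)"
    unfolding sqnorm_def z_def zero_fill_def by (intro sum.cong) auto
  also have "\<dots> = (\<Sum>j\<in>{..<p} - \<Omega>. (cmod (y j))\<^sup>2)"
    by (simp add: sum.If_cases Diff_eq)
  also have "\<dots> = sqnorm p y - (\<Sum>j\<in>\<Omega>. (cmod (y j))\<^sup>2)"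
    using assms(1) by (simp add: sqnorm_def sum_diff finite_subset)
  also have "sqnorm p y = sqnorm p x"
    unfolding y_def by (rule sqnorm_dft_apply)
  finally show ?thesis
    using False unfolding rel_err_def f_pat_def y_def by (simp add: diff_divide_distrib)
qed

lemma
  assumes "sets P = sets (\<Pi>\<^sub>M j\<in>{..<p}. (borel :: complex measure))"
  shows sqnorm_measurable: "sqnorm p \<in> borel_measurable P"
    and f_pat_measurable: "f_pat p \<Omega> \<in> borel_measurable P"
proof -
  have [measurable]: "(\<lambda>x. x k) \<in> borel_measurable P" if "k < p" for k
    using that by (subst measurable_cong_sets[OF assms refl]) (simp add: measurable_component_singleton)
  show "sqnorm p \<in> borel_measurable P"
    unfolding sqnorm_def[abs_def] by measurable
  show "f_pat p \<Omega> \<in> borel_measurable P"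
    unfolding f_pat_def[abs_def] sqnorm_def dft_apply_def by measurable
qed

lemma integral_rel_err:
  assumes P: "prob_space P"
    and sets_P: "sets P = sets (\<Pi>\<^sub>M j\<in>{..<p}. (borel :: complex measure))"
    and null: "measure P {x \<in> space P. \<forall>j<p. x j = 0} = 0"
    and \<Omega>: "\<Omega> \<subseteq> {..<p}"
  shows "(\<integral>x. rel_err p \<Omega> x \<partial>P) = 1 - (\<integral>x. f_pat p \<Omega> x \<partial>P)"
proof -
  interpret P: prob_space P by (rule P)
  note [measurable] = sqnorm_measurable[OF sets_P] f_pat_measurable[OF sets_P]
  have "emeasure P {x \<in> space P. sqnorm p x = 0} = 0"
    using null by (simp add: sqnorm_eq_0_iff P.emeasure_eq_measure)
  then have "AE x in P. sqnorm p x \<noteq> 0"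
    by (intro AE_I'[of "{x \<in> space P. sqnorm p x = 0}"] null_setsI) auto
  then have "AE x in P. (if sqnorm p x = 0 then 0 else 1 - f_pat p \<Omega> x) = 1 - f_pat p \<Omega> x"
    by eventually_elim simp
  then have "(\<integral>x. rel_err p \<Omega> x \<partial>P) = (\<integral>x. 1 - f_pat p \<Omega> x \<partial>P)"
    unfolding rel_err_eq[OF \<Omega>] by (rule integral_cong_AE[rotated 2]) measurable
  also have "\<dots> = 1 - (\<integral>x. f_pat p \<Omega> x \<partial>P)"
  proof (subst Bochner_Integration.integral_diff)
    show "integrable P (f_pat p \<Omega>)"
      using f_pat_bounds[OF \<Omega>] by (intro P.integrable_const_bound[where B = 1]) auto
  qed (auto simp: P.prob_space)
  finally show ?thesis .
qed

lemma finite_patterns: "finite (patterns p n)"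
  unfolding patterns_def by (rule finite_subset[of _ "Pow {..<p}"]) auto

lemma card_patterns: "card (patterns p n) = p choose n"
  unfolding patterns_def using n_subsets[of "{..<p}" n] by simp

lemma patterns_nonempty: "n \<le> p \<Longrightarrow> patterns p n \<noteq> {}"
  unfolding patterns_def by (auto intro!: exI[of _ "{..<n}"])

lemma patterns_subset: "\<Omega> \<in> patterns p n \<Longrightarrow> \<Omega> \<subseteq> {..<p}"
  unfolding patterns_def by simp

lemma emp_avg_le_iff:
  "m \<ge> 1 \<Longrightarrow> emp_avg p m \<Omega> xs \<le> emp_avg p m \<Omega>' xs
    \<longleftrightarrow> (\<Sum>i<m. f_pat p \<Omega> (xs i)) \<le> (\<Sum>i<m. f_pat p \<Omega>' (xs i))"
  by (simp add: emp_avg_def divide_le_cancel)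

lemma indep_vars_PiM_components:
  assumes "I \<noteq> {}" and M: "\<And>i. i \<in> I \<Longrightarrow> prob_space (M i)"
  shows "prob_space.indep_vars (\<Pi>\<^sub>M i\<in>I. M i) M (\<lambda>i x. x i) I"
proof -
  interpret prob_space "\<Pi>\<^sub>M i\<in>I. M i" by (rule prob_space_PiM[OF M])
  have "distr (\<Pi>\<^sub>M i\<in>I. M i) (\<Pi>\<^sub>M i\<in>I. M i) (\<lambda>x. \<lambda>i\<in>I. x i)
      = distr (\<Pi>\<^sub>M i\<in>I. M i) (\<Pi>\<^sub>M i\<in>I. M i) (\<lambda>x. x)"
    by (rule distr_cong) (auto simp: space_PiM)
  also have "\<dots> = (\<Pi>\<^sub>M i\<in>I. distr (\<Pi>\<^sub>M i\<in>I. M i) (M i) (\<lambda>x. x i))"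
    by (auto intro!: PiM_cong simp: distr_PiM_component M)
  finally show ?thesis
    using assms(1) by (subst indep_vars_iff_distr_eq_PiM') auto
qed

lemma
  fixes P :: "'a measure" and g :: "'a \<Rightarrow> real"
  assumes P: "prob_space P" and g_meas: "g \<in> borel_measurable P"
    and g_bounded: "\<And>x. g x \<in> {0..1}" and m: "m \<ge> 1" and t_nonneg: "t \<ge> 0"
  shows hoeffding_PiM_upper:
      "measure (\<Pi>\<^sub>M i\<in>{..<m}. P) {xs \<in> space (\<Pi>\<^sub>M i\<in>{..<m}. P).
         real m * ((\<integral>x. g x \<partial>P) + t) \<le> (\<Sum>i<m. g (xs i))} \<le> exp (- 2 * real m * t\<^sup>2)"
    and hoeffding_PiM_lower:
      "measure (\<Pi>\<^sub>M i\<in>{..<m}. P) {xs \<in> space (\<Pi>\<^sub>M i\<in>{..<m}. P).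
         (\<Sum>i<m. g (xs i)) \<le> real m * ((\<integral>x. g x \<partial>P) - t)} \<le> exp (- 2 * real m * t\<^sup>2)"
proof -
  let ?M = "\<Pi>\<^sub>M i\<in>{..<m}. P"
  interpret M: prob_space ?M by (rule prob_space_PiM) (simp add: P)
  have sample_nonempty: "{..<m} \<noteq> {}" using m by (auto simp: lessThan_empty_iff)
  have expectation_sample: "M.expectation (\<lambda>xs. g (xs i)) = (\<integral>x. g x \<partial>P)" if "i \<in> {..<m}" for i
    using integral_distr[of "\<lambda>xs. xs i" ?M P g] distr_PiM_component[of "{..<m}" "\<lambda>_. P" i] P that g_meas
    by simp
  interpret H: Hoeffding_ineq ?M "{..<m}" "\<lambda>i xs. g (xs i)" "\<lambda>_. 0" "\<lambda>_. 1" "real m * (\<integral>x. g x \<partial>P)"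
  proof unfold_locales
    show "M.indep_vars (\<lambda>_. borel) (\<lambda>i xs. g (xs i)) {..<m}"
      using M.indep_vars_compose2[OF indep_vars_PiM_components[OF sample_nonempty P], of "\<lambda>_. g"] g_meas
      by simp
    show "real m * (\<integral>x. g x \<partial>P) \<equiv> (\<Sum>i\<in>{..<m}. M.expectation (\<lambda>xs. g (xs i)))"
      by (simp add: expectation_sample)
  qed (use g_bounded in auto)
  have deviation_nonneg: "0 \<le> real m * t" using t_nonneg by simp
  have var: "(\<Sum>i\<in>{..<m}. ((\<lambda>_. 1::real) i - (\<lambda>_. 0) i)\<^sup>2) = real m" by simp
  have rate: "- 2 * (real m * t)\<^sup>2 / real m = - 2 * real m * t\<^sup>2"
    using m by (simp add: power2_eq_square)
  show "measure ?M {xs \<in> space ?M. real m * ((\<integral>x. g x \<partial>P) + t) \<le> (\<Sum>i<m. g (xs i))}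
      \<le> exp (- 2 * real m * t\<^sup>2)"
    using H.Hoeffding_ineq_ge[OF deviation_nonneg] m unfolding var rate by (simp add: distrib_left)
  show "measure ?M {xs \<in> space ?M. (\<Sum>i<m. g (xs i)) \<le> real m * ((\<integral>x. g x \<partial>P) - t)}
      \<le> exp (- 2 * real m * t\<^sup>2)"
    using H.Hoeffding_ineq_le[OF deviation_nonneg] m unfolding var rate by (simp add: right_diff_distrib)
qed

lemma uniform_deviation_event:
  fixes P :: "'a measure" and g :: "'c \<Rightarrow> 'a \<Rightarrow> real"
  assumes P: "prob_space P" and C: "finite C" "c\<^sub>0 \<in> C" and m: "m \<ge> 1" and t_nonneg: "t \<ge> 0"
    and g_meas: "\<And>c. c \<in> C \<Longrightarrow> g c \<in> borel_measurable P"
    and g_bounded: "\<And>c x. c \<in> C \<Longrightarrow> g c x \<in> {0..1}"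
  defines "M \<equiv> \<Pi>\<^sub>M i\<in>{..<m}. P"
  shows "\<exists>E \<in> sets M. measure M E \<ge> 1 - (card C + 1) * exp (- 2 * real m * t\<^sup>2) \<and>
           (\<forall>xs \<in> E. (\<forall>c \<in> C. (\<Sum>i<m. g c (xs i)) < real m * ((\<integral>x. g c x \<partial>P) + t)) \<and>
                      real m * ((\<integral>x. g c\<^sub>0 x \<partial>P) - t) < (\<Sum>i<m. g c\<^sub>0 (xs i)))"
proof -
  interpret M: prob_space M unfolding M_def by (rule prob_space_PiM) (simp add: P)
  define too_high where "too_high c =
    {xs \<in> space M. real m * ((\<integral>x. g c x \<partial>P) + t) \<le> (\<Sum>i<m. g c (xs i))}" for c
  define too_low where "too_low =
    {xs \<in> space M. (\<Sum>i<m. g c\<^sub>0 (xs i)) \<le> real m * ((\<integral>x. g c\<^sub>0 x \<partial>P) - t)}"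
  define bad where "bad = too_low \<union> (\<Union>c\<in>C. too_high c)"
  have sample_measurable[measurable]: "(\<lambda>xs. \<Sum>i<m. g c (xs i)) \<in> borel_measurable M"
    if "c \<in> C" for c
    using g_meas[OF that] unfolding M_def by measurable
  have too_high_sets: "too_high c \<in> sets M" if "c \<in> C" for c
    using that unfolding too_high_def by measurable
  have too_low_sets: "too_low \<in> sets M"
    using C unfolding too_low_def by measurable
  have bad_sets: "bad \<in> sets M"
    unfolding bad_def using too_high_sets too_low_sets C by blast
  have "measure M bad \<le> measure M too_low + measure M (\<Union>c\<in>C. too_high c)"
    unfolding bad_def using too_high_sets too_low_sets C by (intro measure_Un_le) auto
  also have "measure M (\<Union>c\<in>C. too_high c) \<le> (\<Sum>c\<in>C. measure M (too_high c))"
    using too_high_sets C by (intro M.finite_measure_subadditive_finite) auto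
  also have "\<dots> \<le> (\<Sum>c\<in>C. exp (- 2 * real m * t\<^sup>2))"
    unfolding too_high_def M_def
    by (intro sum_mono hoeffding_PiM_upper[OF P g_meas g_bounded m t_nonneg])
  also have "measure M too_low \<le> exp (- 2 * real m * t\<^sup>2)"
    unfolding too_low_def M_def by (intro hoeffding_PiM_lower[OF P g_meas g_bounded m t_nonneg] C)
  finally have "measure M bad \<le> (card C + 1) * exp (- 2 * real m * t\<^sup>2)"
    by (simp add: algebra_simps)
  moreover have "measure M (space M - bad) = 1 - measure M bad"
    by (rule M.prob_compl[OF bad_sets])
  ultimately show ?thesis
    using bad_sets
    by (intro bexI[of _ "space M - bad"])
       (auto simp: bad_def too_high_def too_low_def not_le)
qed

lemma union_bound_radius:
  fixes N m :: nat
  assumes "N \<ge> 1" and "m \<ge> 1" and "0 < \<beta>" "\<beta> \<le> 1"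
  defines "t \<equiv> sqrt (2 / real m * (ln N + ln (2 / \<beta>))) / 2"
  shows "t \<ge> 0" and "(N + 1) * exp (- 2 * real m * t\<^sup>2) \<le> \<beta>"
proof -
  have exponent_nonneg: "ln N + ln (2 / \<beta>) \<ge> 0"
    using assms(1,3,4) by simp
  then show "t \<ge> 0"
    unfolding t_def by simp
  have "2 * real m * t\<^sup>2 = ln N + ln (2 / \<beta>)"
    unfolding t_def using exponent_nonneg assms(2) by (simp add: power_divide)
  then have "(N + 1) * exp (- 2 * real m * t\<^sup>2) = (N + 1) / (2 * N) * \<beta>"
    using assms(1,3) by (simp add: exp_diff exp_minus field_simps)
  also have "\<dots> \<le> 1 * \<beta>"
    using assms(1,3) by (intro mult_right_mono) (simp_all add: field_simps)
  finally show "(N + 1) * exp (- 2 * real m * t\<^sup>2) \<le> \<beta>"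
    by simp
qed

lemma empirical_maximizer_near_optimal:
  fixes P :: "'a measure" and g :: "'c \<Rightarrow> 'a \<Rightarrow> real" and sel :: "(nat \<Rightarrow> 'a) \<Rightarrow> 'c"
  assumes P: "prob_space P" and C: "finite C" "C \<noteq> {}" and m: "m \<ge> 1"
    and \<beta>: "0 < \<beta>" "\<beta> \<le> 1"
    and g_meas: "\<And>c. c \<in> C \<Longrightarrow> g c \<in> borel_measurable P"
    and g_bounded: "\<And>c x. c \<in> C \<Longrightarrow> g c x \<in> {0..1}"
    and sel: "\<And>xs. xs \<in> space (\<Pi>\<^sub>M i\<in>{..<m}. P) \<Longrightarrow> sel xs \<in> C"
    and sel_max: "\<And>xs c. xs \<in> space (\<Pi>\<^sub>M i\<in>{..<m}. P) \<Longrightarrow> c \<in> C \<Longrightarrow>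
                    (\<Sum>i<m. g c (xs i)) \<le> (\<Sum>i<m. g (sel xs) (xs i))"
  shows "\<exists>E \<in> sets (\<Pi>\<^sub>M i\<in>{..<m}. P). measure (\<Pi>\<^sub>M i\<in>{..<m}. P) E \<ge> 1 - \<beta> \<and>
           (\<forall>xs \<in> E. (MAX c\<in>C. \<integral>x. g c x \<partial>P)
              \<le> (\<integral>x. g (sel xs) x \<partial>P) + sqrt (2 / real m * (ln (card C) + ln (2 / \<beta>))))"
proof -
  let ?M = "\<Pi>\<^sub>M i\<in>{..<m}. P"
  define t where "t = sqrt (2 / real m * (ln (card C) + ln (2 / \<beta>))) / 2"
  have "card C \<ge> 1"
    using C by (simp add: Suc_leI card_gt_0_iff)
  then have t_nonneg: "t \<ge> 0" and confidence: "(card C + 1) * exp (- 2 * real m * t\<^sup>2) \<le> \<beta>"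
    using union_bound_radius[OF _ m \<beta>] unfolding t_def by blast+
  have "(MAX c\<in>C. \<integral>x. g c x \<partial>P) \<in> (\<lambda>c. \<integral>x. g c x \<partial>P) ` C"
    using C by (intro Max_in) auto
  then obtain c\<^sub>0 where c\<^sub>0: "c\<^sub>0 \<in> C" "(MAX c\<in>C. \<integral>x. g c x \<partial>P) = (\<integral>x. g c\<^sub>0 x \<partial>P)"
    by blast
  obtain E where E: "E \<in> sets ?M" "measure ?M E \<ge> 1 - (card C + 1) * exp (- 2 * real m * t\<^sup>2)"
    and deviation: "\<forall>xs \<in> E. (\<forall>c \<in> C. (\<Sum>i<m. g c (xs i)) < real m * ((\<integral>x. g c x \<partial>P) + t)) \<and>
                      real m * ((\<integral>x. g c\<^sub>0 x \<partial>P) - t) < (\<Sum>i<m. g c\<^sub>0 (xs i))"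
    using uniform_deviation_event[of P C c\<^sub>0 m t g, OF P C(1) c\<^sub>0(1) m t_nonneg g_meas g_bounded] by blast
  have "(MAX c\<in>C. \<integral>x. g c x \<partial>P) \<le> (\<integral>x. g (sel xs) x \<partial>P) + 2 * t" if xs: "xs \<in> E" for xs
  proof -
    have "xs \<in> space ?M" using sets.sets_into_space[OF E(1)] xs by blast
    have "real m * ((\<integral>x. g c\<^sub>0 x \<partial>P) - t) < (\<Sum>i<m. g c\<^sub>0 (xs i))"
      using deviation xs by blast
    also have "\<dots> \<le> (\<Sum>i<m. g (sel xs) (xs i))"
      by (rule sel_max[OF \<open>xs \<in> space ?M\<close> c\<^sub>0(1)])
    also have "\<dots> < real m * ((\<integral>x. g (sel xs) x \<partial>P) + t)"
      using deviation xs sel[OF \<open>xs \<in> space ?M\<close>] by blast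
    finally show ?thesis
      using m c\<^sub>0(2) by (simp add: mult_less_cancel_left_pos)
  qed
  moreover have "2 * t = sqrt (2 / real m * (ln (card C) + ln (2 / \<beta>)))"
    unfolding t_def by simp
  moreover have "1 - \<beta> \<le> measure ?M E"
    using E(2) confidence by linarith
  ultimately show ?thesis
    using E(1) by auto
qed

theorem proposition1:
  fixes p n m :: nat and \<beta> :: real
    and P :: "(nat \<Rightarrow> complex) measure"
    and \<Omega>m :: "(nat \<Rightarrow> nat \<Rightarrow> complex) \<Rightarrow> nat set"
  assumes "p \<ge> 1" and "1 \<le> n" and "n \<le> p" and "m \<ge> 1"
    and "0 < \<beta>" and "\<beta> < 1"
    and "prob_space P"
    and "sets P = sets (\<Pi>\<^sub>M j\<in>{..<p}. (borel :: complex measure))"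
    and "measure P {x \<in> space P. \<forall>j<p. x j = 0} = 0"
    and "\<forall>xs \<in> space (\<Pi>\<^sub>M i\<in>{..<m}. P). \<Omega>m xs \<in> patterns p n"
    and "\<forall>xs \<in> space (\<Pi>\<^sub>M i\<in>{..<m}. P). \<forall>\<Omega> \<in> patterns p n.
           emp_avg p m \<Omega> xs \<le> emp_avg p m (\<Omega>m xs) xs"
  shows "\<exists>E \<in> sets (\<Pi>\<^sub>M i\<in>{..<m}. P).
           measure (\<Pi>\<^sub>M i\<in>{..<m}. P) E \<ge> 1 - \<beta> \<and>
           (\<forall>xs \<in> E. (\<integral>x. rel_err p (\<Omega>m xs) x \<partial>P)
              \<le> 1 - eps_P p n P
                + sqrt (2 / real m * (ln (real (p choose n)) + ln (2 / \<beta>))))"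
proof -
  let ?M = "\<Pi>\<^sub>M i\<in>{..<m}. P"
  have "\<exists>E \<in> sets ?M. measure ?M E \<ge> 1 - \<beta> \<and>
          (\<forall>xs \<in> E. (MAX \<Omega>\<in>patterns p n. \<integral>x. f_pat p \<Omega> x \<partial>P)
             \<le> (\<integral>x. f_pat p (\<Omega>m xs) x \<partial>P)
               + sqrt (2 / real m * (ln (card (patterns p n)) + ln (2 / \<beta>))))"
    using assms(4-6,10,11) patterns_nonempty[OF \<open>n \<le> p\<close>]
      f_pat_measurable[OF assms(8)] f_pat_bounds[OF patterns_subset]
    by (intro empirical_maximizer_near_optimal assms(7) finite_patterns) (auto simp: emp_avg_le_iff)
  then obtain E where E: "E \<in> sets ?M" "measure ?M E \<ge> 1 - \<beta>"
    and near_optimal: "\<And>xs. xs \<in> E \<Longrightarrow> eps_P p n P \<le> (\<integral>x. f_pat p (\<Omega>m xs) x \<partial>P)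
                   + sqrt (2 / real m * (ln (real (p choose n)) + ln (2 / \<beta>)))"
    unfolding eps_P_def card_patterns by blast
  have "(\<integral>x. rel_err p (\<Omega>m xs) x \<partial>P) = 1 - (\<integral>x. f_pat p (\<Omega>m xs) x \<partial>P)" if "xs \<in> E" for xs
    using sets.sets_into_space[OF E(1)] that assms(10)
    by (intro integral_rel_err[OF assms(7-9)] patterns_subset) blast
  with near_optimal have "(\<integral>x. rel_err p (\<Omega>m xs) x \<partial>P)
      \<le> 1 - eps_P p n P + sqrt (2 / real m * (ln (real (p choose n)) + ln (2 / \<beta>)))"
    if "xs \<in> E" for xs
    using that by fastforce
  with E show ?thesis
    by blast
qed

end
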